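(* Let $q$ be a prime power, $m\ge1$, and $1\le k<n$ integers. Let $X\in \mathbb{F}_{q^m}^{k\times(n-k)}$ be chosen uniformly at random. Then $$\Pr\big(\mathrm{rs} [\,I_k \mid X\,] \text{ is an MRD code}\big) \geq 1-\sum_{r=0}^k r\binom{k}{k-r}_q\binom{n-k}{r}_q q^{r^2}q^{-m}.$$
   Context: $\binom{a}{b}_q$ is the Gaussian binomial coefficient, the number of $b$-dimensional subspaces of $\mathbb{F}_q^a$. Fix an $\mathbb{F}_q$-basis $b_1,\dots,b_m$ of $\mathbb{F}_{q^m}$; the rank of $v\in\mathbb{F}_{q^m}^n$ is the rank of the matrix $M\in\mathbb{F}_q^{m\times n}$ with $v_j=\sum_i M_{ij}b_i$, and the rank distance is $d_R(u,v)=\mathrm{rk}(u-v)$. A linear rank-metric code of dimension $k$ is a $k$-dimensional $\mathbb{F}_{q^m}$-subspace of $\mathbb{F}_{q^m}^n$; it is MRD if its minimum rank distance is $n-k+1$. $\mathrm{rs}$ denotes the $\mathbb{F}_{q^m}$-row space. *)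

theory Defs
  imports Complex_Main "HOL-Library.FuncSet" "HOL-Computational_Algebra.Primes"
begin

text \<open>F is a subfield of the finite field 'a (playing the role of F_q inside F_{q^m}).\<close>
definition subfield :: "'a::field set \<Rightarrow> bool" where
  "subfield F \<longleftrightarrow> 0 \<in> F \<and> 1 \<in> F \<and>
     (\<forall>x\<in>F. \<forall>y\<in>F. x + y \<in> F \<and> x * y \<in> F) \<and>
     (\<forall>x\<in>F. - x \<in> F \<and> inverse x \<in> F)"

definition prime_power :: "nat \<Rightarrow> bool" where
  "prime_power q \<longleftrightarrow> (\<exists>p e. prime p \<and> e > 0 \<and> q = p ^ e)"

definition gauss_binom :: "nat \<Rightarrow> nat \<Rightarrow> nat \<Rightarrow> real" where
  "gauss_binom q a b = (if b \<le> a then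
      (\<Prod>i<b. (real q ^ (a - i) - 1) / (real q ^ (i + 1) - 1)) else 0)"

definition F_indep :: "'a::field set \<Rightarrow> (nat \<Rightarrow> 'a) \<Rightarrow> nat set \<Rightarrow> bool" where
  "F_indep F v J \<longleftrightarrow> (\<forall>c. (\<forall>j\<in>J. c j \<in> F) \<and> (\<Sum>j\<in>J. c j * v j) = 0 \<longrightarrow> (\<forall>j\<in>J. c j = 0))"

text \<open>Rank of v in F_{q^m}^n: the column rank over F_q of its coordinate matrix,
  i.e. the maximal number of F_q-linearly independent entries v_1..v_n.\<close>
definition rank_R :: "'a::field set \<Rightarrow> nat \<Rightarrow> (nat \<Rightarrow> 'a) \<Rightarrow> nat" where
  "rank_R F n v = Max {card J | J. J \<subseteq> {..<n} \<and> F_indep F v J}"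

definition rank_dist :: "'a::field set \<Rightarrow> nat \<Rightarrow> (nat \<Rightarrow> 'a) \<Rightarrow> (nat \<Rightarrow> 'a) \<Rightarrow> nat" where
  "rank_dist F n u v = rank_R F n (\<lambda>j. u j - v j)"

definition min_rank_dist :: "'a::field set \<Rightarrow> nat \<Rightarrow> (nat \<Rightarrow> 'a) set \<Rightarrow> nat" where
  "min_rank_dist F n C = Min {rank_dist F n u v | u v. u \<in> C \<and> v \<in> C \<and> u \<noteq> v}"

definition is_MRD :: "'a::field set \<Rightarrow> nat \<Rightarrow> nat \<Rightarrow> (nat \<Rightarrow> 'a) set \<Rightarrow> bool" where
  "is_MRD F n k C \<longleftrightarrow> min_rank_dist F n C = n - k + 1"

text \<open>Generator matrix [I_k | X] (k x n) and its row space over F_{q^m};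
  vectors of length n are functions nat => 'a that vanish from index n on.\<close>
definition gen_IX :: "nat \<Rightarrow> (nat \<Rightarrow> nat \<Rightarrow> 'a::field) \<Rightarrow> nat \<Rightarrow> nat \<Rightarrow> 'a" where
  "gen_IX k X i j = (if j < k then (if i = j then 1 else 0) else X i (j - k))"

definition row_space :: "nat \<Rightarrow> nat \<Rightarrow> (nat \<Rightarrow> nat \<Rightarrow> 'a::field) \<Rightarrow> (nat \<Rightarrow> 'a) set" where
  "row_space k n G = {(\<lambda>j. if j < n then (\<Sum>i<k. u i * G i j) else 0) | u. True}"

end

theory Submission
  imports Defs
begin

text \<open>
  If rs[I_k | X] is not MRD, it contains a codeword c = d [I_k | X] with d \<noteq> 0 and rank at most
  n - k. Expanding c greedily over F_q yields a k-set S of positions and coefficients lam in F_q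
  such that every c_j with j \<in> S is an F_q-combination of the earlier c_i with i \<notin> S; there are
  q^inv(S) choices of lam, where inv(S) counts the pairs i < j with i \<notin> S and j \<in> S. Subtracting
  these combinations from the columns j \<in> S of [I_k | X] gives k columns orthogonal to d, hence
  linearly dependent. The columns j < k are unit vectors, so the last column of a dependency sits
  at some j0 \<ge> k and lies in the span of the earlier ones. For fixed (S, lam, j0), column j0 - k
  of X enters only as a translate of column j0, so this happens for at most a fraction q^-m of
  all X. A union bound over the triples, with S split at k into parts of sizes k - r and r, and
  the identity [a choose b]_q = (sum over b-subsets S of [a] of q^inv(S)) give the bound.
\<close>

section \<open>Gaussian binomials as generating functions of inversions\<close>

lemma gauss_binom_0_right [simp]: "gauss_binom q a 0 = 1"
  by (simp add: gauss_binom_def)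

lemma gauss_binom_0_Suc [simp]: "gauss_binom q 0 (Suc b) = 0"
  by (simp add: gauss_binom_def)

lemma gauss_binom_Suc_right:
  assumes "b \<le> a"
  shows "gauss_binom q a (Suc b) = gauss_binom q a b * (real q ^ (a - b) - 1) / (real q ^ Suc b - 1)"
  using assms by (cases "b = a") (simp_all add: gauss_binom_def)

lemma gauss_binom_Suc_Suc_eq:
  assumes "b \<le> a"
  shows "gauss_binom q (Suc a) (Suc b) = gauss_binom q a b * (real q ^ Suc a - 1) / (real q ^ Suc b - 1)"
proof -
  have num: "(\<Prod>i<Suc b. real q ^ (Suc a - i) - 1) = (real q ^ Suc a - 1) * (\<Prod>i<b. real q ^ (a - i) - 1)"
    by (subst prod.lessThan_Suc_shift) simp
  have den: "(\<Prod>i<Suc b. real q ^ (i + 1) - 1) = (\<Prod>i<b. real q ^ (i + 1) - 1) * (real q ^ Suc b - 1)"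
    by simp
  show ?thesis
    using assms unfolding gauss_binom_def by (simp only: if_True Suc_le_mono prod_dividef num den) simp
qed

lemma gauss_binom_Suc_Suc:
  assumes "q \<ge> 2"
  shows "gauss_binom q (Suc a) (Suc b) = gauss_binom q a (Suc b) + real q ^ (a - b) * gauss_binom q a b"
proof (cases "b \<le> a")
  case True
  have "real q ^ Suc b > 1" using assms by (intro one_less_power) auto
  moreover have "real q ^ a = real q ^ (a - b) * real q ^ b"
    using True by (simp flip: power_add)
  ultimately show ?thesis
    unfolding gauss_binom_Suc_Suc_eq[OF True] gauss_binom_Suc_right[OF True] by (simp add: field_simps)
qed (simp add: gauss_binom_def)

definition inversion_pairs :: "nat set \<Rightarrow> (nat \<times> nat) set" where
  "inversion_pairs S = (SIGMA j:S. {i. i < j \<and> i \<notin> S})"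

definition inversions :: "nat set \<Rightarrow> nat" where
  "inversions S = (\<Sum>j\<in>S. card {i. i < j \<and> i \<notin> S})"

definition subset_inversions_gf :: "nat \<Rightarrow> nat \<Rightarrow> nat \<Rightarrow> nat" where
  "subset_inversions_gf q a b = (\<Sum>S | S \<subseteq> {..<a} \<and> card S = b. q ^ inversions S)"

lemma finite_inversion_pairs: "finite S \<Longrightarrow> finite (inversion_pairs S)"
  by (simp add: inversion_pairs_def)

lemma card_inversion_pairs: "finite S \<Longrightarrow> card (inversion_pairs S) = inversions S"
  unfolding inversion_pairs_def inversions_def by (subst card_SigmaI) auto

lemma inversions_insert_max:
  assumes "S \<subseteq> {..<a}"
  shows "inversions (insert a S) = inversions S + (a - card S)"
proof -
  have fin: "finite S" using assms finite_subset by blast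
  have "inversions (insert a S) =
          card {i. i < a \<and> i \<notin> insert a S} + (\<Sum>j\<in>S. card {i. i < j \<and> i \<notin> insert a S})"
    unfolding inversions_def using fin assms by (subst sum.insert) auto
  also have "{i. i < a \<and> i \<notin> insert a S} = {..<a} - S" by auto
  also have "(\<Sum>j\<in>S. card {i. i < j \<and> i \<notin> insert a S}) = inversions S"
    unfolding inversions_def using assms
    by (intro sum.cong refl arg_cong[where f = card]) auto
  finally show ?thesis using assms fin by (simp add: card_Diff_subset)
qed

lemma subsets_lessThan_Suc:
  "{S. S \<subseteq> {..<Suc a} \<and> card S = Suc b} =
   {S. S \<subseteq> {..<a} \<and> card S = Suc b} \<union> insert a ` {S. S \<subseteq> {..<a} \<and> card S = b}"
proof (intro set_eqI iffI)
  fix S assume S: "S \<in> {S. S \<subseteq> {..<Suc a} \<and> card S = Suc b}"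
  show "S \<in> {S. S \<subseteq> {..<a} \<and> card S = Suc b} \<union> insert a ` {S. S \<subseteq> {..<a} \<and> card S = b}"
  proof (cases "a \<in> S")
    case True
    then have "S = insert a (S - {a})" "S - {a} \<subseteq> {..<a}" "card (S - {a}) = b"
      using S by auto
    then show ?thesis by blast
  next
    case False
    then show ?thesis using S by (auto simp: less_Suc_eq)
  qed
next
  fix S assume "S \<in> {S. S \<subseteq> {..<a} \<and> card S = Suc b} \<union> insert a ` {S. S \<subseteq> {..<a} \<and> card S = b}"
  then show "S \<in> {S. S \<subseteq> {..<Suc a} \<and> card S = Suc b}"
    by (auto simp: card_insert_if finite_subset[of _ "{..<a}"])
qed

lemma subset_inversions_gf_0_right [simp]: "subset_inversions_gf q a 0 = 1"
proof -
  have "{S. S \<subseteq> {..<a} \<and> card S = 0} = {{}}"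
    by (auto simp: finite_subset[of _ "{..<a}"])
  then show ?thesis by (simp add: subset_inversions_gf_def inversions_def)
qed

lemma subset_inversions_gf_0_Suc [simp]: "subset_inversions_gf q 0 (Suc b) = 0"
proof -
  have none: "{S. S \<subseteq> {..<0::nat} \<and> card S = Suc b} = {}" by auto
  show ?thesis unfolding subset_inversions_gf_def none by simp
qed

lemma subset_inversions_gf_Suc_Suc:
  "subset_inversions_gf q (Suc a) (Suc b) =
     subset_inversions_gf q a (Suc b) + q ^ (a - b) * subset_inversions_gf q a b"
proof -
  let ?A = "{S. S \<subseteq> {..<a} \<and> card S = Suc b}"
  let ?B = "{S. S \<subseteq> {..<a} \<and> card S = b}"
  have fin: "finite ?A" "finite ?B" by (auto intro: finite_subset[of _ "Pow {..<a}"])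
  have "inj_on (insert a) ?B"
    by (rule inj_onI) (metis Diff_insert_absorb lessThan_iff less_irrefl mem_Collect_eq subsetD)
  then have "(\<Sum>S\<in>insert a ` ?B. q ^ inversions S) = (\<Sum>S\<in>?B. q ^ (a - b) * q ^ inversions S)"
    by (simp add: sum.reindex inversions_insert_max power_add mult.commute)
  moreover have "?A \<inter> insert a ` ?B = {}" by auto
  ultimately show ?thesis
    unfolding subset_inversions_gf_def subsets_lessThan_Suc
    by (simp add: sum.union_disjoint fin sum_distrib_left)
qed

lemma gauss_binom_eq_subset_inversions_gf:
  assumes "q \<ge> 2"
  shows "gauss_binom q a b = real (subset_inversions_gf q a b)"
proof (induction a arbitrary: b)
  case 0
  then show ?case by (cases b) auto
next
  case (Suc a)
  then show ?case
    by (cases b) (auto simp: subset_inversions_gf_Suc_Suc gauss_binom_Suc_Suc[OF assms])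
qed

lemma Int_lessThan_Un_shift: "(S::nat set) = S \<inter> {..<k} \<union> (+) k ` {x. k + x \<in> S}"
proof (intro set_eqI iffI)
  fix y assume "y \<in> S"
  then show "y \<in> S \<inter> {..<k} \<union> (+) k ` {x. k + x \<in> S}"
    by (cases "y < k") (auto simp: image_iff intro!: exI[of _ "y - k"])
qed auto

lemma inversions_Un_shift:
  assumes S1: "S1 \<subseteq> {..<k}" and fin2: "finite S2"
  shows "inversions (S1 \<union> (+) k ` S2) = inversions S1 + card S2 * (k - card S1) + inversions S2"
proof -
  let ?S = "S1 \<union> (+) k ` S2"
  have fin1: "finite S1" using S1 finite_subset by blast
  have "inversions ?S = (\<Sum>j\<in>S1. card {i. i < j \<and> i \<notin> ?S}) + (\<Sum>x\<in>S2. card {i. i < k + x \<and> i \<notin> ?S})"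
    unfolding inversions_def using fin1 fin2 S1
    by (subst sum.union_disjoint) (auto simp: sum.reindex)
  also have "(\<Sum>j\<in>S1. card {i. i < j \<and> i \<notin> ?S}) = inversions S1"
    unfolding inversions_def using S1 by (intro sum.cong refl arg_cong[where f = card]) auto
  also have "(\<Sum>x\<in>S2. card {i. i < k + x \<and> i \<notin> ?S}) = (\<Sum>x\<in>S2. (k - card S1) + card {i. i < x \<and> i \<notin> S2})"
  proof (rule sum.cong[OF refl])
    fix x
    have "{i. i < k + x \<and> i \<notin> ?S} = ({..<k} - S1) \<union> (+) k ` {i. i < x \<and> i \<notin> S2}"
    proof (intro set_eqI iffI)
      fix y assume "y \<in> {i. i < k + x \<and> i \<notin> ?S}"
      then show "y \<in> ({..<k} - S1) \<union> (+) k ` {i. i < x \<and> i \<notin> S2}"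
        by (cases "y < k") (auto simp: image_iff intro!: exI[of _ "y - k"])
    qed (use S1 in auto)
    moreover have "({..<k} - S1) \<inter> (+) k ` {i. i < x \<and> i \<notin> S2} = {}" by auto
    ultimately show "card {i. i < k + x \<and> i \<notin> ?S} = (k - card S1) + card {i. i < x \<and> i \<notin> S2}"
      using S1 fin1 by (simp add: card_Un_disjoint card_Diff_subset card_image)
  qed
  finally show ?thesis by (simp add: sum.distrib inversions_def)
qed

lemma card_Un_shift:
  fixes k :: nat
  assumes "S1 \<subseteq> {..<k}" "finite S2"
  shows "card (S1 \<union> (+) k ` S2) = card S1 + card S2"
proof -
  have "finite S1" using assms(1) finite_subset by blast
  moreover have "S1 \<inter> (+) k ` S2 = {}" using assms(1) by auto
  ultimately show ?thesis using assms(2) by (simp add: card_Un_disjoint card_image)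
qed

lemma bij_betw_Un_shift:
  assumes "k \<le> n"
  shows "bij_betw (\<lambda>(r, S1, S2). S1 \<union> (+) k ` S2)
           (SIGMA r:{0..k}. {S1. S1 \<subseteq> {..<k} \<and> card S1 = k - r} \<times> {S2. S2 \<subseteq> {..<n - k} \<and> card S2 = r})
           {S. S \<subseteq> {..<n} \<and> card S = k}"
proof (rule bij_betw_byWitness[where f' = "\<lambda>S. (card {x. k + x \<in> S}, S \<inter> {..<k}, {x. k + x \<in> S})"])
  show "\<forall>S\<in>{S. S \<subseteq> {..<n} \<and> card S = k}.
          (\<lambda>(r, S1, S2). S1 \<union> (+) k ` S2) (card {x. k + x \<in> S}, S \<inter> {..<k}, {x. k + x \<in> S}) = S"
    using Int_lessThan_Un_shift by auto
  show "(\<lambda>(r, S1, S2). S1 \<union> (+) k ` S2) ` (SIGMA r:{0..k}. {S1. S1 \<subseteq> {..<k} \<and> card S1 = k - r} \<times>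
          {S2. S2 \<subseteq> {..<n - k} \<and> card S2 = r}) \<subseteq> {S. S \<subseteq> {..<n} \<and> card S = k}"
    using assms by (auto simp: card_Un_shift finite_subset[of _ "{..<n - k}"])
  show "(\<lambda>S. (card {x. k + x \<in> S}, S \<inter> {..<k}, {x. k + x \<in> S})) ` {S. S \<subseteq> {..<n} \<and> card S = k}
          \<subseteq> (SIGMA r:{0..k}. {S1. S1 \<subseteq> {..<k} \<and> card S1 = k - r} \<times> {S2. S2 \<subseteq> {..<n - k} \<and> card S2 = r})"
  proof (rule image_subsetI)
    fix S assume S: "S \<in> {S. S \<subseteq> {..<n} \<and> card S = k}"
    have sub: "{x. k + x \<in> S} \<subseteq> {..<n - k}" using S by auto
    then have "card S = card (S \<inter> {..<k}) + card {x. k + x \<in> S}"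
      using card_Un_shift[of "S \<inter> {..<k}" k "{x. k + x \<in> S}"]
      by (simp add: finite_subset flip: Int_lessThan_Un_shift)
    then show "(card {x. k + x \<in> S}, S \<inter> {..<k}, {x. k + x \<in> S}) \<in> (SIGMA r:{0..k}.
        {S1. S1 \<subseteq> {..<k} \<and> card S1 = k - r} \<times> {S2. S2 \<subseteq> {..<n - k} \<and> card S2 = r})"
      using S sub by auto
  qed
next
  have "{x. k + x \<in> S1 \<union> (+) k ` S2} = S2" if "S1 \<subseteq> {..<k}" for S1 S2
    using that by auto
  then show "\<forall>p\<in>SIGMA r:{0..k}. {S1. S1 \<subseteq> {..<k} \<and> card S1 = k - r} \<times> {S2. S2 \<subseteq> {..<n - k} \<and> card S2 = r}.
      (\<lambda>S. (card {x. k + x \<in> S}, S \<inter> {..<k}, {x. k + x \<in> S})) ((\<lambda>(r, S1, S2). S1 \<union> (+) k ` S2) p) = p"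
    by auto
qed

lemma sum_card_shift_inversions:
  assumes "k \<le> n"
  shows "(\<Sum>S | S \<subseteq> {..<n} \<and> card S = k. card (S \<inter> {k..<n}) * q ^ inversions S) =
    (\<Sum>r=0..k. r * subset_inversions_gf q k (k - r) * subset_inversions_gf q (n - k) r * q ^ r\<^sup>2)"
proof -
  define A where "A r = {S1. S1 \<subseteq> {..<k} \<and> card S1 = k - r}" for r
  define B where "B r = {S2. S2 \<subseteq> {..<n - k} \<and> card S2 = r}" for r
  have fin: "finite (A r)" "finite (B r)" for r
    unfolding A_def B_def by (auto intro: finite_subset[of _ "Pow {..<k}"] finite_subset[of _ "Pow {..<n - k}"])
  have summand: "card ((S1 \<union> (+) k ` S2) \<inter> {k..<n}) * q ^ inversions (S1 \<union> (+) k ` S2) =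
      r * q ^ r\<^sup>2 * (q ^ inversions S1 * q ^ inversions S2)" if "S1 \<in> A r" "S2 \<in> B r" "r \<le> k" for r S1 S2
  proof -
    have "(S1 \<union> (+) k ` S2) \<inter> {k..<n} = (+) k ` S2" using that assms by (auto simp: A_def B_def)
    moreover have "finite S2" using that fin(2) by (auto simp: B_def finite_subset)
    ultimately show ?thesis
      using that by (simp add: A_def B_def inversions_Un_shift card_image power_add power2_eq_square)
  qed
  have "(\<Sum>S | S \<subseteq> {..<n} \<and> card S = k. card (S \<inter> {k..<n}) * q ^ inversions S) =
      (\<Sum>(r, S1, S2)\<in>(SIGMA r:{0..k}. A r \<times> B r).
         card ((S1 \<union> (+) k ` S2) \<inter> {k..<n}) * q ^ inversions (S1 \<union> (+) k ` S2))"
    using sum.reindex_bij_betw[OF bij_betw_Un_shift[OF assms, folded A_def B_def],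
        where g = "\<lambda>S. card (S \<inter> {k..<n}) * q ^ inversions S"]
    by (simp add: split_def)
  also have "\<dots> = (\<Sum>(r, S1, S2)\<in>(SIGMA r:{0..k}. A r \<times> B r). r * q ^ r\<^sup>2 * (q ^ inversions S1 * q ^ inversions S2))"
    by (rule sum.cong) (auto simp: summand)
  also have "\<dots> = (\<Sum>r=0..k. \<Sum>(S1, S2)\<in>A r \<times> B r. r * q ^ r\<^sup>2 * (q ^ inversions S1 * q ^ inversions S2))"
    by (subst sum.Sigma) (auto simp: fin)
  also have "\<dots> = (\<Sum>r=0..k. r * q ^ r\<^sup>2 * ((\<Sum>S1\<in>A r. q ^ inversions S1) * (\<Sum>S2\<in>B r. q ^ inversions S2)))"
    by (simp add: sum.cartesian_product[symmetric] sum_product sum_distrib_left mult_ac sum.swap[of _ "B _"])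
  finally show ?thesis by (simp add: subset_inversions_gf_def A_def B_def mult_ac)
qed

section \<open>Rank over the subfield\<close>

definition F_span :: "'a::field set \<Rightarrow> (nat \<Rightarrow> 'a) \<Rightarrow> nat set \<Rightarrow> 'a set" where
  "F_span F c I = {\<Sum>i\<in>I. a i * c i | a. \<forall>i\<in>I. a i \<in> F}"

lemma F_span_mono:
  assumes "subfield F" "I \<subseteq> I'" "finite I'"
  shows "F_span F c I \<subseteq> F_span F c I'"
proof
  fix x assume "x \<in> F_span F c I"
  then obtain a where a: "\<forall>i\<in>I. a i \<in> F" "x = (\<Sum>i\<in>I. a i * c i)" unfolding F_span_def by blast
  let ?a = "\<lambda>i. if i \<in> I then a i else 0"
  have "(\<Sum>i\<in>I'. ?a i * c i) = (\<Sum>i\<in>I. ?a i * c i)"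
    by (rule sum.mono_neutral_right) (use assms(2,3) in auto)
  then have "x = (\<Sum>i\<in>I'. ?a i * c i)" using a(2) by simp
  moreover have "\<forall>i\<in>I'. ?a i \<in> F" using a(1) assms(1) by (simp add: subfield_def)
  ultimately show "x \<in> F_span F c I'" unfolding F_span_def by (intro CollectI exI[of _ ?a] conjI)
qed

lemma F_indep_insert:
  assumes sf: "subfield F" and fin: "finite J" and ind: "F_indep F c J" and "j \<notin> J"
    and not_span: "c j \<notin> F_span F c J"
  shows "F_indep F c (insert j J)"
  unfolding F_indep_def
proof (intro allI impI)
  fix a assume a: "(\<forall>i\<in>insert j J. a i \<in> F) \<and> (\<Sum>i\<in>insert j J. a i * c i) = 0"
  then have sum_J: "(\<Sum>i\<in>J. a i * c i) = - (a j * c j)"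
    using fin \<open>j \<notin> J\<close> by (simp add: eq_neg_iff_add_eq_0 add.commute)
  have "a j = 0"
  proof (rule ccontr)
    assume "a j \<noteq> 0"
    have "(\<Sum>i\<in>J. (- a i * inverse (a j)) * c i) = - inverse (a j) * (\<Sum>i\<in>J. a i * c i)"
      by (simp add: sum_distrib_left mult_ac)
    with \<open>a j \<noteq> 0\<close> have "c j = (\<Sum>i\<in>J. (- a i * inverse (a j)) * c i)"
      by (simp add: sum_J)
    moreover have "\<forall>i\<in>J. - a i * inverse (a j) \<in> F" using a sf by (simp add: subfield_def)
    ultimately have "c j \<in> F_span F c J"
      unfolding F_span_def by (intro CollectI exI[of _ "\<lambda>i. - a i * inverse (a j)"] conjI)
    with not_span show False ..
  qed
  with a sum_J ind show "\<forall>i\<in>insert j J. a i = 0" unfolding F_indep_def by simp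
qed

lemma exists_F_indep_prefix_spanning:
  assumes "subfield F"
  shows "\<exists>J\<subseteq>{..<n}. F_indep F c J \<and> (\<forall>j<n. j \<notin> J \<longrightarrow> c j \<in> F_span F c {i\<in>J. i < j})"
proof (induction n)
  case 0
  show ?case by (auto simp: F_indep_def)
next
  case (Suc n)
  then obtain J where J: "J \<subseteq> {..<n}" "F_indep F c J" "\<forall>j<n. j \<notin> J \<longrightarrow> c j \<in> F_span F c {i\<in>J. i < j}"
    by blast
  have prefix: "{i\<in>J. i < n} = J" using J(1) by auto
  show ?case
  proof (cases "c n \<in> F_span F c J")
    case True
    then show ?thesis using J prefix by (intro exI[of _ J]) (auto simp: less_Suc_eq)
  next
    case False
    have "F_indep F c (insert n J)"
      using F_indep_insert[OF assms _ J(2) _ False] J(1) finite_subset by auto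
    moreover have "{i\<in>insert n J. i < j} = {i\<in>J. i < j}" if "j < n" for j using that by auto
    ultimately show ?thesis using J by (intro exI[of _ "insert n J"]) (auto simp: less_Suc_eq)
  qed
qed

lemma rank_R_le_iff: "rank_R F n c \<le> r \<longleftrightarrow> (\<forall>J\<subseteq>{..<n}. F_indep F c J \<longrightarrow> card J \<le> r)"
proof -
  let ?K = "{card J |J. J \<subseteq> {..<n} \<and> F_indep F c J}"
  have "?K \<subseteq> {..n}" using card_mono[of "{..<n}"] by fastforce
  then have "finite ?K" by (rule finite_subset) simp
  moreover have "card {} \<in> ?K" by (auto simp: F_indep_def intro!: exI[of _ "{}"])
  ultimately show ?thesis unfolding rank_R_def by (subst Max_le_iff) blast+
qed

lemma card_le_rank_R: "J \<subseteq> {..<n} \<Longrightarrow> F_indep F c J \<Longrightarrow> card J \<le> rank_R F n c"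
  using rank_R_le_iff[of F n c "rank_R F n c"] by blast

lemma rank_R_le: "rank_R F n c \<le> n"
  unfolding rank_R_le_iff by (metis card_lessThan card_mono finite_lessThan)

lemma rank_R_cong: "(\<And>j. j < n \<Longrightarrow> c j = c' j) \<Longrightarrow> rank_R F n c = rank_R F n c'"
proof -
  assume eq: "\<And>j. j < n \<Longrightarrow> c j = c' j"
  have "F_indep F c J = F_indep F c' J" if "J \<subseteq> {..<n}" for J
  proof -
    have "(\<Sum>i\<in>J. a i * c i) = (\<Sum>i\<in>J. a i * c' i)" for a
      using that eq by (intro sum.cong) auto
    then show ?thesis unfolding F_indep_def by simp
  qed
  then have "{card J |J. J \<subseteq> {..<n} \<and> F_indep F c J} = {card J |J. J \<subseteq> {..<n} \<and> F_indep F c' J}"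
    by blast
  then show ?thesis unfolding rank_R_def by simp
qed

lemma F_indep_nonzero:
  assumes "subfield F" "finite J" "F_indep F c J" "j \<in> J"
  shows "c j \<noteq> 0"
proof
  assume "c j = 0"
  have "(\<Sum>i\<in>J. (if i = j then 1 else 0) * c i) = (\<Sum>i\<in>J. if i = j then c i else 0)"
    by (rule sum.cong) simp_all
  with \<open>c j = 0\<close> have "(\<Sum>i\<in>J. (if i = j then 1 else 0) * c i) = 0"
    using assms(2,4) by simp
  moreover have "\<forall>i\<in>J. (if i = j then 1 else 0) \<in> F" using assms(1) by (simp add: subfield_def)
  ultimately show False using assms(3,4) unfolding F_indep_def by fastforce
qed

lemma rank_R_le_card_support:
  assumes "subfield F" "finite T" "\<And>j. j < n \<Longrightarrow> j \<notin> T \<Longrightarrow> c j = 0"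
  shows "rank_R F n c \<le> card T"
  unfolding rank_R_le_iff
proof (intro allI impI)
  fix J assume J: "J \<subseteq> {..<n}" "F_indep F c J"
  then have "J \<subseteq> T" using F_indep_nonzero[OF assms(1) finite_subset[of J "{..<n}"]] assms(3) by blast
  then show "card J \<le> card T" using assms(2) by (rule card_mono[rotated])
qed

lemma rank_R_le_imp_expansion:
  assumes sf: "subfield F" and "k \<le> n" and "rank_R F n c \<le> n - k"
  shows "\<exists>S lam. S \<subseteq> {..<n} \<and> card S = k \<and> lam \<in> inversion_pairs S \<rightarrow>\<^sub>E F \<and>
           (\<forall>j\<in>S. c j = (\<Sum>i\<in>{i. i < j \<and> i \<notin> S}. lam (j, i) * c i))"
proof -
  obtain J where J: "J \<subseteq> {..<n}" "F_indep F c J" "\<forall>j<n. j \<notin> J \<longrightarrow> c j \<in> F_span F c {i\<in>J. i < j}"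
    using exists_F_indep_prefix_spanning[OF sf] by blast
  have "card J \<le> n - k" using card_le_rank_R[OF J(1,2)] assms(3) by simp
  moreover have "card ({..<n} - J) = n - card J" using J(1) by (simp add: card_Diff_subset finite_subset)
  ultimately have "k \<le> card ({..<n} - J)" using \<open>k \<le> n\<close> by simp
  then obtain S where S: "S \<subseteq> {..<n} - J" "card S = k" by (rule obtain_subset_with_card_n)
  have "\<forall>j\<in>S. c j \<in> F_span F c {i. i < j \<and> i \<notin> S}"
  proof
    fix j assume "j \<in> S"
    then have "c j \<in> F_span F c {i\<in>J. i < j}" using J(3) S(1) by blast
    moreover have "{i\<in>J. i < j} \<subseteq> {i. i < j \<and> i \<notin> S}" using S(1) by blast
    ultimately show "c j \<in> F_span F c {i. i < j \<and> i \<notin> S}"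
      using F_span_mono[OF sf, of "{i\<in>J. i < j}" "{i. i < j \<and> i \<notin> S}" c] by auto
  qed
  then have "\<forall>j\<in>S. \<exists>a. (\<forall>i\<in>{i. i < j \<and> i \<notin> S}. a i \<in> F) \<and> c j = (\<Sum>i\<in>{i. i < j \<and> i \<notin> S}. a i * c i)"
    unfolding F_span_def by blast
  then obtain A where A: "\<forall>j\<in>S. (\<forall>i\<in>{i. i < j \<and> i \<notin> S}. A j i \<in> F) \<and>
      c j = (\<Sum>i\<in>{i. i < j \<and> i \<notin> S}. A j i * c i)"
    by (rule bchoice[THEN exE])
  define lam where "lam = restrict (\<lambda>(j, i). A j i) (inversion_pairs S)"
  have "lam \<in> inversion_pairs S \<rightarrow>\<^sub>E F" using A by (auto simp: lam_def inversion_pairs_def)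
  moreover have "\<forall>j\<in>S. c j = (\<Sum>i\<in>{i. i < j \<and> i \<notin> S}. lam (j, i) * c i)"
    using A by (simp add: lam_def inversion_pairs_def)
  ultimately show ?thesis using S by blast
qed

section \<open>Low-rank codewords of non-MRD codes\<close>

definition codeword :: "nat \<Rightarrow> (nat \<Rightarrow> nat \<Rightarrow> 'a::field) \<Rightarrow> (nat \<Rightarrow> 'a) \<Rightarrow> nat \<Rightarrow> 'a" where
  "codeword k G u j = (\<Sum>i<k. u i * G i j)"

lemma rank_dist_codewords:
  "rank_dist F n (\<lambda>j. if j < n then codeword k G u j else 0) (\<lambda>j. if j < n then codeword k G v j else 0) =
     rank_R F n (codeword k G (\<lambda>i. u i - v i))"
  unfolding rank_dist_def by (rule rank_R_cong) (simp add: codeword_def sum_subtractf left_diff_distrib)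

lemma codeword_unit: "l < k \<Longrightarrow> codeword k G (\<lambda>i. if i = l then 1 else 0) = G l"
  by (simp add: fun_eq_iff codeword_def if_distrib[where f = "\<lambda>x. x * _"] cong: if_cong)

lemma rank_R_row_gen_IX_le:
  assumes "subfield F" "l < k"
  shows "rank_R F n (gen_IX k X l) \<le> n - k + 1"
proof -
  have "rank_R F n (gen_IX k X l) \<le> card (insert l {k..<n})"
    using assms by (intro rank_R_le_card_support) (auto simp: gen_IX_def)
  then show ?thesis using assms(2) by simp
qed

text \<open>
  Since a row of [I_k | X] has rank at most n - k + 1, the minimum distance is at most
  n - k + 1, and a code that is not MRD has two codewords at rank distance at most n - k.
\<close>

lemma not_MRD_imp_low_rank_codeword:
  assumes sf: "subfield F" and "0 < k" "k < n"
    and not_MRD: "\<not> is_MRD F n k (row_space k n (gen_IX k X))"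
  shows "\<exists>d. (\<exists>l<k. d l \<noteq> 0) \<and> rank_R F n (codeword k (gen_IX k X) d) \<le> n - k"
proof -
  define G where "G = gen_IX k X"
  define vec where "vec u = (\<lambda>j. if j < n then codeword k G u j else 0)" for u
  define D where "D = {rank_dist F n u v |u v. u \<in> range vec \<and> v \<in> range vec \<and> u \<noteq> v}"
  have row_space: "row_space k n G = range vec"
    unfolding row_space_def vec_def codeword_def by auto
  have "D \<subseteq> {..n}" unfolding D_def rank_dist_def using rank_R_le by auto
  then have "finite D" by (rule finite_subset) simp
  define e0 where "e0 = (\<lambda>i::nat. if i = 0 then 1 else 0 :: 'a)"
  have "vec e0 0 = 1" "vec (\<lambda>_. 0) 0 = 0"
    using assms(2,3) by (simp_all add: vec_def codeword_unit e0_def G_def gen_IX_def codeword_def)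
  then have "rank_dist F n (vec e0) (vec (\<lambda>_. 0)) \<in> D" unfolding D_def by force
  moreover have "rank_dist F n (vec e0) (vec (\<lambda>_. 0)) \<le> n - k + 1"
    using rank_R_row_gen_IX_le[OF sf assms(2)] assms(2)
    by (simp add: vec_def rank_dist_codewords codeword_unit e0_def G_def)
  ultimately have "Min D \<le> n - k + 1" using \<open>finite D\<close> Min_le order_trans by blast
  moreover have "Min D \<noteq> n - k + 1"
    using not_MRD unfolding is_MRD_def min_rank_dist_def D_def row_space[unfolded G_def] by simp
  moreover have "Min D \<in> D" using \<open>finite D\<close> \<open>_ \<in> D\<close> by (intro Min_in) auto
  ultimately obtain a b where ab: "vec a \<noteq> vec b" "rank_dist F n (vec a) (vec b) \<le> n - k"
    unfolding D_def by fastforce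
  then have "rank_R F n (codeword k G (\<lambda>i. a i - b i)) \<le> n - k"
    by (simp add: vec_def rank_dist_codewords)
  moreover have "\<exists>l<k. a l - b l \<noteq> 0"
  proof (rule ccontr)
    assume "\<not> (\<exists>l<k. a l - b l \<noteq> 0)"
    then have "vec a = vec b" by (auto simp: vec_def codeword_def)
    with ab(1) show False ..
  qed
  ultimately show ?thesis unfolding G_def by (intro exI[of _ "\<lambda>i. a i - b i"]) simp
qed

section \<open>Dependent columns\<close>

definition col_in_span :: "nat \<Rightarrow> (nat \<Rightarrow> nat \<Rightarrow> 'a::field) \<Rightarrow> nat set \<Rightarrow> nat \<Rightarrow> bool" where
  "col_in_span k M R j0 \<longleftrightarrow> (\<exists>\<gamma>. \<forall>l<k. M l j0 = (\<Sum>j\<in>R. \<gamma> j * M l j))"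

lemma indep_cols_span:
  fixes M :: "nat \<Rightarrow> nat \<Rightarrow> 'a::{field,finite}"
  assumes "finite S" "card S = k"
    and indep: "\<And>\<beta>. \<forall>l<k. (\<Sum>j\<in>S. \<beta> j * M l j) = 0 \<Longrightarrow> \<forall>j\<in>S. \<beta> j = 0"
  shows "\<exists>\<beta>. \<forall>l<k. (\<Sum>j\<in>S. \<beta> j * M l j) = e l"
proof -
  define L where "L \<beta> = (\<lambda>l\<in>{..<k}. \<Sum>j\<in>S. \<beta> j * M l j)" for \<beta>
  have "inj_on L (S \<rightarrow>\<^sub>E UNIV)"
  proof (rule inj_onI)
    fix \<beta> \<beta>' assume \<beta>: "\<beta> \<in> S \<rightarrow>\<^sub>E UNIV" "\<beta>' \<in> S \<rightarrow>\<^sub>E UNIV" and "L \<beta> = L \<beta>'"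
    have "\<forall>l<k. (\<Sum>j\<in>S. (\<beta> j - \<beta>' j) * M l j) = 0"
    proof (intro allI impI)
      fix l assume "l < k"
      then show "(\<Sum>j\<in>S. (\<beta> j - \<beta>' j) * M l j) = 0"
        using fun_cong[OF \<open>L \<beta> = L \<beta>'\<close>, of l] by (simp add: L_def left_diff_distrib sum_subtractf)
    qed
    then have "\<forall>j\<in>S. \<beta> j - \<beta>' j = 0" by (rule indep)
    then show "\<beta> = \<beta>'" using PiE_ext[OF \<beta>] by simp
  qed
  then have "card (L ` (S \<rightarrow>\<^sub>E UNIV)) = card ({..<k} \<rightarrow>\<^sub>E (UNIV :: 'a set))"
    using assms(1,2) by (simp add: card_image card_PiE)
  moreover have "L ` (S \<rightarrow>\<^sub>E UNIV) \<subseteq> {..<k} \<rightarrow>\<^sub>E UNIV"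
    by (simp add: L_def restrict_PiE_iff image_subset_iff)
  moreover have "finite ({..<k} \<rightarrow>\<^sub>E (UNIV :: 'a set))" by (simp add: finite_PiE)
  ultimately have "L ` (S \<rightarrow>\<^sub>E UNIV) = {..<k} \<rightarrow>\<^sub>E UNIV" by (metis card_subset_eq)
  then have "restrict e {..<k} \<in> L ` (S \<rightarrow>\<^sub>E UNIV)" by simp
  then obtain \<beta> where \<beta>: "L \<beta> = restrict e {..<k}" by (metis imageE)
  show ?thesis
  proof (intro exI allI impI)
    fix l assume "l < k"
    then show "(\<Sum>j\<in>S. \<beta> j * M l j) = e l" using fun_cong[OF \<beta>, of l] by (simp add: L_def)
  qed
qed

lemma left_kernel_imp_cols_dependent:
  fixes M :: "nat \<Rightarrow> nat \<Rightarrow> 'a::{field,finite}"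
  assumes "finite S" "card S = k" "l0 < k" "d l0 \<noteq> 0"
    and kernel: "\<forall>j\<in>S. (\<Sum>l<k. d l * M l j) = 0"
  shows "\<exists>\<beta>. (\<forall>l<k. (\<Sum>j\<in>S. \<beta> j * M l j) = 0) \<and> (\<exists>j\<in>S. \<beta> j \<noteq> 0)"
proof (rule ccontr)
  assume "\<nexists>\<beta>. (\<forall>l<k. (\<Sum>j\<in>S. \<beta> j * M l j) = 0) \<and> (\<exists>j\<in>S. \<beta> j \<noteq> 0)"
  then have indep: "\<forall>j\<in>S. \<beta> j = 0" if "\<forall>l<k. (\<Sum>j\<in>S. \<beta> j * M l j) = 0" for \<beta>
    using that by blast
  obtain \<beta> where \<beta>: "\<forall>l<k. (\<Sum>j\<in>S. \<beta> j * M l j) = (if l = l0 then 1 else 0)"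
    using indep_cols_span[OF assms(1,2) indep, where e = "\<lambda>l. if l = l0 then 1 else 0"] by blast
  have "(\<Sum>l<k. d l * (\<Sum>j\<in>S. \<beta> j * M l j)) = (\<Sum>l<k. if l = l0 then d l else 0)"
    using \<beta> by (intro sum.cong) auto
  also have "\<dots> = d l0" using assms(3) by simp
  finally have "d l0 = (\<Sum>j\<in>S. \<beta> j * (\<Sum>l<k. d l * M l j))"
    by (simp add: sum_distrib_left mult_ac sum.swap[of _ "{..<k}"])
  also have "\<dots> = 0" using kernel by simp
  finally show False using assms(4) by simp
qed

lemma last_nonzero_col_in_span:
  fixes M :: "nat \<Rightarrow> nat \<Rightarrow> 'a::field"
  assumes "finite S" "j0 \<in> S" "\<beta> j0 \<noteq> 0" "\<forall>j\<in>S. j0 < j \<longrightarrow> \<beta> j = 0"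
    and dep: "\<forall>l<k. (\<Sum>j\<in>S. \<beta> j * M l j) = 0"
  shows "col_in_span k M {j\<in>S. j < j0} j0"
  unfolding col_in_span_def
proof (intro exI allI impI)
  fix l assume "l < k"
  have "(\<Sum>j\<in>S. \<beta> j * M l j) = \<beta> j0 * M l j0 + (\<Sum>j\<in>S - {j0}. \<beta> j * M l j)"
    using assms(1,2) by (simp add: sum.remove)
  also have "(\<Sum>j\<in>S - {j0}. \<beta> j * M l j) = (\<Sum>j\<in>{j\<in>S. j < j0}. \<beta> j * M l j)"
    using assms(1,4) by (intro sum.mono_neutral_right) auto
  finally have "\<beta> j0 * M l j0 = - (\<Sum>j\<in>{j\<in>S. j < j0}. \<beta> j * M l j)"
    using dep \<open>l < k\<close> by (simp add: eq_neg_iff_add_eq_0)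
  then show "M l j0 = (\<Sum>j\<in>{j\<in>S. j < j0}. - \<beta> j / \<beta> j0 * M l j)"
    using assms(3) by (simp add: sum_negf field_simps flip: sum_divide_distrib)
qed

lemma dependency_beyond_unit_cols:
  fixes M :: "nat \<Rightarrow> nat \<Rightarrow> 'a::field"
  assumes "finite S" "\<exists>j\<in>S. \<beta> j \<noteq> 0"
    and dep: "\<forall>l<k. (\<Sum>j\<in>S. \<beta> j * M l j) = 0"
    and unit: "\<And>l j. l \<in> S \<Longrightarrow> l < k \<Longrightarrow> j < k \<Longrightarrow> M l j = (if l = j then 1 else 0)"
  shows "\<exists>j\<in>S. k \<le> j \<and> \<beta> j \<noteq> 0"
proof (rule ccontr)
  assume beyond: "\<not> (\<exists>j\<in>S. k \<le> j \<and> \<beta> j \<noteq> 0)"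
  obtain l where l: "l \<in> S" "\<beta> l \<noteq> 0" using assms(2) by blast
  then have "l < k" using beyond by (meson not_less)
  have "(\<Sum>j\<in>S. \<beta> j * M l j) = (\<Sum>j\<in>S. if j = l then \<beta> j else 0)"
    using beyond unit[OF l(1) \<open>l < k\<close>] by (intro sum.cong) force+
  also have "\<dots> = \<beta> l" using assms(1) l(1) by simp
  finally show False using dep \<open>l < k\<close> l(2) by simp
qed

lemma dependent_cols_imp_col_in_span:
  fixes M :: "nat \<Rightarrow> nat \<Rightarrow> 'a::field"
  assumes "finite S" "\<exists>j\<in>S. \<beta> j \<noteq> 0"
    and dep: "\<forall>l<k. (\<Sum>j\<in>S. \<beta> j * M l j) = 0"
    and unit: "\<And>l j. l \<in> S \<Longrightarrow> l < k \<Longrightarrow> j < k \<Longrightarrow> M l j = (if l = j then 1 else 0)"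
  shows "\<exists>j0\<in>S. k \<le> j0 \<and> col_in_span k M {j\<in>S. j < j0} j0"
proof -
  define j0 where "j0 = Max {j\<in>S. \<beta> j \<noteq> 0}"
  have fin: "finite {j\<in>S. \<beta> j \<noteq> 0}" using assms(1) by simp
  have "j0 \<in> S" "\<beta> j0 \<noteq> 0" using Max_in[OF fin] assms(2) unfolding j0_def by auto
  moreover have "\<forall>j\<in>S. j0 < j \<longrightarrow> \<beta> j = 0" using Max_ge[OF fin] unfolding j0_def by force
  moreover obtain j where "j \<in> S" "k \<le> j" "\<beta> j \<noteq> 0"
    using dependency_beyond_unit_cols[OF assms] by blast
  then have "k \<le> j0" using Max_ge[OF fin, of j] unfolding j0_def by simp
  ultimately show ?thesis using last_nonzero_col_in_span[OF assms(1) _ _ _ dep] by blast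
qed

definition reduced_gen :: "nat \<Rightarrow> (nat \<Rightarrow> nat \<Rightarrow> 'a::field) \<Rightarrow> nat set \<Rightarrow> (nat \<times> nat \<Rightarrow> 'a) \<Rightarrow> nat \<Rightarrow> nat \<Rightarrow> 'a" where
  "reduced_gen k X S lam l j = gen_IX k X l j - (\<Sum>i\<in>{i. i < j \<and> i \<notin> S}. lam (j, i) * gen_IX k X l i)"

lemma reduced_gen_unit_cols:
  assumes "l \<in> S" "l < k" "j < k"
  shows "reduced_gen k X S lam l j = (if l = j then 1 else 0)"
proof -
  have "(\<Sum>i\<in>{i. i < j \<and> i \<notin> S}. lam (j, i) * gen_IX k X l i) = 0"
    using assms by (intro sum.neutral) (auto simp: gen_IX_def)
  then show ?thesis using assms(3) by (simp add: reduced_gen_def gen_IX_def)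
qed

lemma left_kernel_reduced_gen:
  assumes "\<forall>j\<in>S. codeword k (gen_IX k X) d j =
             (\<Sum>i\<in>{i. i < j \<and> i \<notin> S}. lam (j, i) * codeword k (gen_IX k X) d i)"
    and "j \<in> S"
  shows "(\<Sum>l<k. d l * reduced_gen k X S lam l j) = 0"
proof -
  have "(\<Sum>l<k. d l * reduced_gen k X S lam l j) =
      codeword k (gen_IX k X) d j - (\<Sum>i\<in>{i. i < j \<and> i \<notin> S}. lam (j, i) * codeword k (gen_IX k X) d i)"
    by (simp add: reduced_gen_def codeword_def right_diff_distrib sum_subtractf sum_distrib_left
        sum.swap[of _ "{..<k}"] mult_ac)
  then show ?thesis using assms by simp
qed

lemma low_rank_codeword_imp_col_in_span:
  fixes X :: "nat \<Rightarrow> nat \<Rightarrow> 'a::{field,finite}"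
  assumes sf: "subfield F" and "k \<le> n" "l0 < k" "d l0 \<noteq> 0"
    and rank: "rank_R F n (codeword k (gen_IX k X) d) \<le> n - k"
  shows "\<exists>S lam j0. S \<subseteq> {..<n} \<and> card S = k \<and> lam \<in> inversion_pairs S \<rightarrow>\<^sub>E F \<and> j0 \<in> S \<and> k \<le> j0 \<and>
           col_in_span k (reduced_gen k X S lam) {j\<in>S. j < j0} j0"
proof -
  obtain S lam where S: "S \<subseteq> {..<n}" "card S = k" "lam \<in> inversion_pairs S \<rightarrow>\<^sub>E F"
    and rel: "\<forall>j\<in>S. codeword k (gen_IX k X) d j =
                (\<Sum>i\<in>{i. i < j \<and> i \<notin> S}. lam (j, i) * codeword k (gen_IX k X) d i)"
    using rank_R_le_imp_expansion[OF sf assms(2) rank] by blast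
  have fin: "finite S" using S(1) finite_subset by blast
  have kernel: "\<forall>j\<in>S. (\<Sum>l<k. d l * reduced_gen k X S lam l j) = 0"
    using left_kernel_reduced_gen[OF rel] by blast
  obtain \<beta> where dep: "\<forall>l<k. (\<Sum>j\<in>S. \<beta> j * reduced_gen k X S lam l j) = 0"
    and nonzero: "\<exists>j\<in>S. \<beta> j \<noteq> 0"
    using left_kernel_imp_cols_dependent[OF fin S(2) assms(3,4) kernel] by blast
  show ?thesis
    using dependent_cols_imp_col_in_span[OF fin nonzero dep reduced_gen_unit_cols] S by blast
qed

section \<open>Counting generator matrices\<close>

lemma bij_betw_PiE_erase_col:
  fixes I :: "'i set" and J :: "'j set" and B :: "'b set"
  assumes "t \<in> J"
  shows "bij_betw (\<lambda>X. ((\<lambda>i\<in>I. (X i)(t := c)), (\<lambda>i\<in>I. X i t))) (I \<rightarrow>\<^sub>E J \<rightarrow>\<^sub>E B)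
           ((\<lambda>X. \<lambda>i\<in>I. (X i)(t := c)) ` (I \<rightarrow>\<^sub>E J \<rightarrow>\<^sub>E B) \<times> (I \<rightarrow>\<^sub>E B))"
proof -
  let ?A = "I \<rightarrow>\<^sub>E J \<rightarrow>\<^sub>E B"
  define col where "col X = (\<lambda>i\<in>I. X i t)" for X :: "'i \<Rightarrow> 'j \<Rightarrow> 'b"
  define er where "er X = (\<lambda>i\<in>I. (X i)(t := c))" for X :: "'i \<Rightarrow> 'j \<Rightarrow> 'b"
  have "inj_on (\<lambda>X. (er X, col X)) ?A"
  proof (rule inj_onI)
    fix X Y assume XY: "X \<in> ?A" "Y \<in> ?A" "(er X, col X) = (er Y, col Y)"
    have "X i = Y i" if "i \<in> I" for i
    proof
      fix s
      have "(X i)(t := c) = (Y i)(t := c)" "X i t = Y i t"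
        using XY(3) that by (auto simp: er_def col_def dest!: fun_cong[where x = i])
      then show "X i s = Y i s" by (cases "s = t") (auto dest: fun_cong[where x = s])
    qed
    then show "X = Y" using PiE_ext[OF XY(1,2)] by blast
  qed
  moreover have "(\<lambda>X. (er X, col X)) ` ?A = er ` ?A \<times> (I \<rightarrow>\<^sub>E B)"
  proof
    show "(\<lambda>X. (er X, col X)) ` ?A \<subseteq> er ` ?A \<times> (I \<rightarrow>\<^sub>E B)"
      using assms by (auto simp: col_def PiE_iff)
  next
    show "er ` ?A \<times> (I \<rightarrow>\<^sub>E B) \<subseteq> (\<lambda>X. (er X, col X)) ` ?A"
    proof clarify
      fix X v assume X: "X \<in> ?A" and v: "v \<in> I \<rightarrow>\<^sub>E B"
      let ?Y = "\<lambda>i\<in>I. (X i)(t := v i)"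
      have "?Y \<in> ?A" using X v assms by (auto simp: PiE_iff extensional_def)
      moreover have "er ?Y = er X" unfolding er_def by (intro restrict_ext) simp
      moreover have "col ?Y = restrict v I" unfolding col_def by (intro restrict_ext) simp
      ultimately show "(er X, v) \<in> (\<lambda>X. (er X, col X)) ` ?A"
        using v by (intro image_eqI[where x = ?Y]) (simp_all add: PiE_restrict)
    qed
  qed
  ultimately have "bij_betw (\<lambda>X. (er X, col X)) ?A (er ` ?A \<times> (I \<rightarrow>\<^sub>E B))"
    by (simp add: bij_betw_def)
  then show ?thesis unfolding er_def col_def .
qed

lemma card_PiE_col_in_image_le:
  fixes T :: "('i \<Rightarrow> 'j \<Rightarrow> 'b) \<Rightarrow> ('i \<Rightarrow> 'b) set"
  assumes fin: "finite I" "finite J" "finite B" and "t \<in> J"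
    and T: "\<And>Y. finite (T Y)" "\<And>Y. card (T Y) \<le> N"
  shows "card {X \<in> I \<rightarrow>\<^sub>E J \<rightarrow>\<^sub>E B. (\<lambda>i\<in>I. X i t) \<in> T (\<lambda>i\<in>I. (X i)(t := c))} * card B ^ card I
           \<le> card (I \<rightarrow>\<^sub>E J \<rightarrow>\<^sub>E B) * N"
proof -
  let ?A = "I \<rightarrow>\<^sub>E J \<rightarrow>\<^sub>E B"
  define col where "col X = (\<lambda>i\<in>I. X i t)" for X :: "'i \<Rightarrow> 'j \<Rightarrow> 'b"
  define er where "er X = (\<lambda>i\<in>I. (X i)(t := c))" for X :: "'i \<Rightarrow> 'j \<Rightarrow> 'b"
  have bij: "bij_betw (\<lambda>X. (er X, col X)) ?A (er ` ?A \<times> (I \<rightarrow>\<^sub>E B))"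
    unfolding er_def col_def using \<open>t \<in> J\<close> by (rule bij_betw_PiE_erase_col)
  have finA: "finite ?A" using fin by (simp add: finite_PiE)
  have cardA: "card ?A = card (er ` ?A) * card B ^ card I"
    using bij_betw_same_card[OF bij] fin by (simp add: card_cartesian_product card_PiE)
  have "card {X \<in> ?A. col X \<in> T (er X)} = card ((\<lambda>X. (er X, col X)) ` {X \<in> ?A. col X \<in> T (er X)})"
    by (intro card_image[symmetric] inj_on_subset[OF bij_betw_imp_inj_on[OF bij]]) blast
  also have "\<dots> \<le> card (Sigma (er ` ?A) T)"
    using finA T(1) by (intro card_mono) auto
  also have "\<dots> \<le> card (er ` ?A) * N"
    using finA T sum_bounded_above[of "er ` ?A" "\<lambda>b. card (T b)" N] by (simp add: card_SigmaI)
  finally show ?thesis unfolding cardA col_def[symmetric] er_def[symmetric]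
    by (simp add: mult_ac)
qed

lemma reduced_gen_erase_col:
  fixes X :: "nat \<Rightarrow> nat \<Rightarrow> 'a::field" and k t :: nat
  defines "X' \<equiv> \<lambda>i\<in>{..<k}. (X i)(t := 0)"
  assumes "l < k" "k + t \<in> S"
  shows "j \<in> S \<Longrightarrow> j \<noteq> k + t \<Longrightarrow> reduced_gen k X' S lam l j = reduced_gen k X S lam l j"
    and "reduced_gen k X S lam l (k + t) = X l t + reduced_gen k X' S lam l (k + t)"
proof -
  have gen: "gen_IX k X' l i = (if i = k + t then 0 else gen_IX k X l i)" for i
    using assms(2) by (auto simp: X'_def gen_IX_def)
  have sums: "(\<Sum>i\<in>{i. i < j \<and> i \<notin> S}. lam (j, i) * gen_IX k X' l i) =
      (\<Sum>i\<in>{i. i < j \<and> i \<notin> S}. lam (j, i) * gen_IX k X l i)" for j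
    using assms(3) by (intro sum.cong) (auto simp: gen)
  show "j \<in> S \<Longrightarrow> j \<noteq> k + t \<Longrightarrow> reduced_gen k X' S lam l j = reduced_gen k X S lam l j"
    unfolding reduced_gen_def sums by (simp add: gen)
  show "reduced_gen k X S lam l (k + t) = X l t + reduced_gen k X' S lam l (k + t)"
    unfolding reduced_gen_def sums using gen_IX_def[of k X l "k + t"] by (simp add: gen)
qed

lemma col_in_span_reduced_gen_imp_col_mem:
  fixes X :: "nat \<Rightarrow> nat \<Rightarrow> 'a::field" and k t :: nat and S :: "nat set"
  defines "X' \<equiv> \<lambda>i\<in>{..<k}. (X i)(t := 0)" and "R \<equiv> {j\<in>S. j < k + t}"
  assumes "k + t \<in> S" and "col_in_span k (reduced_gen k X S lam) R (k + t)"
  shows "(\<lambda>l\<in>{..<k}. X l t) \<in>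
           (\<lambda>\<gamma>. \<lambda>l\<in>{..<k}. (\<Sum>j\<in>R. \<gamma> j * reduced_gen k X' S lam l j) - reduced_gen k X' S lam l (k + t))
           ` (R \<rightarrow>\<^sub>E UNIV)"
proof -
  obtain \<gamma> where \<gamma>: "\<forall>l<k. reduced_gen k X S lam l (k + t) = (\<Sum>j\<in>R. \<gamma> j * reduced_gen k X S lam l j)"
    using assms(4) unfolding col_in_span_def by blast
  have "X l t = (\<Sum>j\<in>R. restrict \<gamma> R j * reduced_gen k X' S lam l j) - reduced_gen k X' S lam l (k + t)"
    if "l < k" for l
    using \<gamma> that reduced_gen_erase_col[where X = X and t = t and lam = lam, OF that assms(3)]
    unfolding X'_def R_def by simp
  then have "(\<lambda>l\<in>{..<k}. X l t) =
      (\<lambda>l\<in>{..<k}. (\<Sum>j\<in>R. restrict \<gamma> R j * reduced_gen k X' S lam l j) - reduced_gen k X' S lam l (k + t))"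
    by (intro restrict_ext) simp
  then show ?thesis by (intro image_eqI[where x = "restrict \<gamma> R"]) auto
qed

lemma card_col_in_span_reduced_gen_le:
  fixes lam :: "nat \<times> nat \<Rightarrow> 'a::{field,finite}"
  assumes "S \<subseteq> {..<n}" "card S = k" "j0 \<in> S" "k \<le> j0"
  shows "card {X \<in> {..<k} \<rightarrow>\<^sub>E {..<n - k} \<rightarrow>\<^sub>E (UNIV::'a set).
                 col_in_span k (reduced_gen k X S lam) {j\<in>S. j < j0} j0} * card (UNIV::'a set)
           \<le> card ({..<k} \<rightarrow>\<^sub>E {..<n - k} \<rightarrow>\<^sub>E (UNIV::'a set))"
proof -
  let ?A = "{..<k} \<rightarrow>\<^sub>E {..<n - k} \<rightarrow>\<^sub>E (UNIV::'a set)"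
  let ?Q = "card (UNIV::'a set)"
  define t where "t = j0 - k"
  define R where "R = {j\<in>S. j < j0}"
  define T where "T Y = (\<lambda>\<gamma>. \<lambda>l\<in>{..<k}. (\<Sum>j\<in>R. \<gamma> j * reduced_gen k Y S lam l j) - reduced_gen k Y S lam l j0)
                          ` (R \<rightarrow>\<^sub>E UNIV)" for Y
  have j0: "j0 = k + t" "t < n - k" using assms(1,3,4) unfolding t_def by auto
  have "finite S" using assms(1) finite_subset by blast
  then have "finite R" unfolding R_def by simp
  have "card R \<le> k - 1"
    using assms(2,3) \<open>finite S\<close> card_mono[of "S - {j0}" R] unfolding R_def by fastforce
  have "0 < k" using assms(2,3) \<open>finite S\<close> card_gt_0_iff by blast
  have "0 < ?Q" by (rule finite_UNIV_card_ge_0) simp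
  have finT: "finite (T Y)" for Y unfolding T_def using \<open>finite R\<close> by (simp add: finite_PiE)
  have cardT: "card (T Y) \<le> ?Q ^ (k - 1)" for Y
  proof -
    have "card (T Y) \<le> card (R \<rightarrow>\<^sub>E (UNIV::'a set))"
      unfolding T_def using \<open>finite R\<close> by (intro card_image_le) (simp add: finite_PiE)
    also have "\<dots> = ?Q ^ card R" using \<open>finite R\<close> by (simp add: card_PiE)
    also have "\<dots> \<le> ?Q ^ (k - 1)"
      using \<open>card R \<le> k - 1\<close> \<open>0 < ?Q\<close> by (intro power_increasing) simp_all
    finally show ?thesis .
  qed
  have "{X \<in> ?A. col_in_span k (reduced_gen k X S lam) R j0} \<subseteq>
      {X \<in> ?A. (\<lambda>l\<in>{..<k}. X l t) \<in> T (\<lambda>l\<in>{..<k}. (X l)(t := 0))}"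
    using col_in_span_reduced_gen_imp_col_mem[of k t S] assms(3) unfolding T_def R_def j0 by auto
  then have "card {X \<in> ?A. col_in_span k (reduced_gen k X S lam) R j0} * ?Q ^ k
      \<le> card {X \<in> ?A. (\<lambda>l\<in>{..<k}. X l t) \<in> T (\<lambda>l\<in>{..<k}. (X l)(t := 0))} * ?Q ^ k"
    by (intro mult_right_mono card_mono) (simp_all add: finite_PiE)
  also have "\<dots> \<le> card ?A * ?Q ^ (k - 1)"
    using card_PiE_col_in_image_le[of "{..<k}" "{..<n - k}" UNIV t T, OF _ _ _ _ finT cardT] j0(2) by simp
  finally have "(card {X \<in> ?A. col_in_span k (reduced_gen k X S lam) R j0} * ?Q) * ?Q ^ (k - 1)
      \<le> card ?A * ?Q ^ (k - 1)"
    using \<open>0 < k\<close> by (simp add: mult.assoc flip: power_Suc)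
  then show ?thesis using \<open>0 < ?Q\<close> unfolding R_def by simp
qed

lemma finite_card_expansion_triples:
  fixes F :: "'a set" and n k :: nat
  assumes "finite F" "card F = q"
  defines "Trip \<equiv> SIGMA S:{S. S \<subseteq> {..<n} \<and> card S = k}. (inversion_pairs S \<rightarrow>\<^sub>E F) \<times> (S \<inter> {k..<n})"
  shows "finite Trip"
    and "card Trip = (\<Sum>S | S \<subseteq> {..<n} \<and> card S = k. card (S \<inter> {k..<n}) * q ^ inversions S)"
proof -
  let ?Sub = "{S. S \<subseteq> {..<n} \<and> card S = k}"
  have finSub: "finite ?Sub" by (rule finite_subset[of _ "Pow {..<n}"]) auto
  have fibre: "finite ((inversion_pairs S \<rightarrow>\<^sub>E F) \<times> (S \<inter> {k..<n}))"
    "card ((inversion_pairs S \<rightarrow>\<^sub>E F) \<times> (S \<inter> {k..<n})) = card (S \<inter> {k..<n}) * q ^ inversions S"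
    if "S \<in> ?Sub" for S
  proof -
    have "finite S" using that finite_subset by blast
    then have "finite (inversion_pairs S)" by (rule finite_inversion_pairs)
    then show "finite ((inversion_pairs S \<rightarrow>\<^sub>E F) \<times> (S \<inter> {k..<n}))"
      using assms(1) by (intro finite_cartesian_product finite_PiE) auto
    show "card ((inversion_pairs S \<rightarrow>\<^sub>E F) \<times> (S \<inter> {k..<n})) = card (S \<inter> {k..<n}) * q ^ inversions S"
      using \<open>finite S\<close> \<open>finite (inversion_pairs S)\<close> assms(2)
      by (simp add: card_cartesian_product card_PiE card_inversion_pairs)
  qed
  show "finite Trip" unfolding Trip_def using finSub fibre(1) by (rule finite_SigmaI)
  show "card Trip = (\<Sum>S\<in>?Sub. card (S \<inter> {k..<n}) * q ^ inversions S)"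
    unfolding Trip_def using finSub fibre by (simp add: card_SigmaI)
qed

lemma card_not_MRD_le:
  fixes F :: "'a::{field,finite} set"
  assumes sf: "subfield F" and "card F = q" and "0 < k" "k < n"
  shows "card {X \<in> {..<k} \<rightarrow>\<^sub>E {..<n - k} \<rightarrow>\<^sub>E (UNIV::'a set). \<not> is_MRD F n k (row_space k n (gen_IX k X))}
           * card (UNIV::'a set)
         \<le> card ({..<k} \<rightarrow>\<^sub>E {..<n - k} \<rightarrow>\<^sub>E (UNIV::'a set))
           * (\<Sum>S | S \<subseteq> {..<n} \<and> card S = k. card (S \<inter> {k..<n}) * q ^ inversions S)"
proof -
  let ?A = "{..<k} \<rightarrow>\<^sub>E {..<n - k} \<rightarrow>\<^sub>E (UNIV::'a set)"
  let ?bad = "{X \<in> ?A. \<not> is_MRD F n k (row_space k n (gen_IX k X))}"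
  define Trip where "Trip = (SIGMA S:{S. S \<subseteq> {..<n} \<and> card S = k}. (inversion_pairs S \<rightarrow>\<^sub>E F) \<times> (S \<inter> {k..<n}))"
  define E where "E = (\<lambda>(S, lam, j0). {X \<in> ?A. col_in_span k (reduced_gen k X S lam) {j\<in>S. j < j0} j0})"
  note Trip = finite_card_expansion_triples[OF finite \<open>card F = q\<close>, where n = n and k = k, folded Trip_def]
  have "?bad \<subseteq> (\<Union>p\<in>Trip. E p)"
  proof clarify
    fix X assume "X \<in> ?A" "\<not> is_MRD F n k (row_space k n (gen_IX k X))"
    then obtain d l0 where d: "l0 < k" "d l0 \<noteq> 0" "rank_R F n (codeword k (gen_IX k X) d) \<le> n - k"
      using not_MRD_imp_low_rank_codeword[OF sf assms(3,4)] by blast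
    obtain S lam j0 where "S \<subseteq> {..<n}" "card S = k" "lam \<in> inversion_pairs S \<rightarrow>\<^sub>E F" "j0 \<in> S" "k \<le> j0"
        "col_in_span k (reduced_gen k X S lam) {j\<in>S. j < j0} j0"
      using low_rank_codeword_imp_col_in_span[OF sf less_imp_le[OF assms(4)] d] by blast
    then show "X \<in> (\<Union>p\<in>Trip. E p)"
      using \<open>X \<in> ?A\<close> unfolding Trip_def E_def by (intro UN_I[of "(S, lam, j0)"]) auto
  qed
  then have "card ?bad \<le> card (\<Union>p\<in>Trip. E p)"
    using finite_subset[of "\<Union>p\<in>Trip. E p" ?A] by (intro card_mono) (auto simp: E_def finite_PiE)
  also have "\<dots> \<le> (\<Sum>p\<in>Trip. card (E p))" using Trip(1) by (rule card_UN_le)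
  finally have "card ?bad * card (UNIV::'a set) \<le> (\<Sum>p\<in>Trip. card (E p) * card (UNIV::'a set))"
    unfolding sum_distrib_right[symmetric] by (rule mult_right_mono) simp
  also have "\<dots> \<le> (\<Sum>p\<in>Trip. card ?A)"
  proof (rule sum_mono)
    fix p assume "p \<in> Trip"
    then obtain S lam j0 where "p = (S, lam, j0)" "S \<subseteq> {..<n}" "card S = k" "j0 \<in> S" "k \<le> j0"
      unfolding Trip_def by auto
    then show "card (E p) * card (UNIV::'a set) \<le> card ?A"
      unfolding E_def using card_col_in_span_reduced_gen_le by simp
  qed
  finally show ?thesis using Trip(2) by (simp add: mult.commute)
qed

lemma prime_power_ge_2: "prime_power q \<Longrightarrow> 2 \<le> q"
  unfolding prime_power_def by (meson le_trans prime_ge_1_nat prime_ge_2_nat self_le_power)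

lemma ratio_ge_of_card_compl_le:
  assumes "finite A" "A \<noteq> {}" "0 < Q" "card {x\<in>A. \<not> P x} * Q \<le> card A * s"
  shows "1 - real s / real Q \<le> real (card {x\<in>A. P x}) / real (card A)"
proof -
  have "0 < card A" using assms(1,2) by (simp add: card_gt_0_iff)
  have "card {x\<in>A. P x} + card {x\<in>A. \<not> P x} = card A"
    using assms(1) by (subst card_Un_disjoint[symmetric]) (auto intro: arg_cong[where f = card])
  then have "real (card {x\<in>A. P x}) / real (card A) = 1 - real (card {x\<in>A. \<not> P x}) / real (card A)"
    using \<open>0 < card A\<close> by (simp add: field_simps flip: of_nat_add)
  moreover have "real (card {x\<in>A. \<not> P x}) * real Q \<le> real (card A) * real s"
    using assms(4) by (simp flip: of_nat_mult)
  then have "real (card {x\<in>A. \<not> P x}) / real (card A) \<le> real s / real Q"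
    using \<open>0 < card A\<close> assms(3) by (simp add: mult.commute mult_imp_div_pos_le mult_imp_le_div_pos)
  ultimately show ?thesis by linarith
qed

theorem theorem4p6:
  fixes F :: "'a::{field,finite} set" and q m k n :: nat
  assumes "prime_power q" and "subfield F" and "card F = q"
    and "card (UNIV::'a set) = q ^ m" and "m \<ge> 1" and "1 \<le> k" and "k < n"
  shows "real (card {X \<in> {..<k} \<rightarrow>\<^sub>E {..<n-k} \<rightarrow>\<^sub>E (UNIV::'a set).
                 is_MRD F n k (row_space k n (gen_IX k X))})
           / real (card ({..<k} \<rightarrow>\<^sub>E {..<n-k} \<rightarrow>\<^sub>E (UNIV::'a set)))
         \<ge> 1 - (\<Sum>r=0..k. real r * gauss_binom q k (k - r) * gauss_binom q (n - k) r
                           * real q ^ (r^2) / real q ^ m)"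
proof -
  have q: "2 \<le> q" using assms(1) by (rule prime_power_ge_2)
  let ?\<Sigma> = "\<Sum>r=0..k. r * subset_inversions_gf q k (k - r) * subset_inversions_gf q (n - k) r * q ^ r\<^sup>2"
  have "card {X \<in> {..<k} \<rightarrow>\<^sub>E {..<n-k} \<rightarrow>\<^sub>E (UNIV::'a set). \<not> is_MRD F n k (row_space k n (gen_IX k X))}
          * q ^ m \<le> card ({..<k} \<rightarrow>\<^sub>E {..<n-k} \<rightarrow>\<^sub>E (UNIV::'a set)) * ?\<Sigma>"
    using card_not_MRD_le[OF assms(2,3), of k n] assms(4,6,7)
    by (simp add: sum_card_shift_inversions)
  then have "1 - real ?\<Sigma> / real (q ^ m) \<le> real (card {X \<in> {..<k} \<rightarrow>\<^sub>E {..<n-k} \<rightarrow>\<^sub>E (UNIV::'a set).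
                 is_MRD F n k (row_space k n (gen_IX k X))}) / real (card ({..<k} \<rightarrow>\<^sub>E {..<n-k} \<rightarrow>\<^sub>E (UNIV::'a set)))"
    using q by (intro ratio_ge_of_card_compl_le) (simp_all add: finite_PiE PiE_eq_empty_iff)
  moreover have "real ?\<Sigma> / real (q ^ m) =
      (\<Sum>r=0..k. real r * gauss_binom q k (k - r) * gauss_binom q (n - k) r * real q ^ (r^2) / real q ^ m)"
    by (simp add: gauss_binom_eq_subset_inversions_gf[OF q] sum_divide_distrib)
  ultimately show ?thesis by simp
qed

end
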